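(* Fix real numbers $\lambda>0$, $\mu>0$, $\Delta\ge 0$ and $T_{cl}>0$. Let $(N_k)_{k\ge1}$ be positive integers with $N_k\to\infty$, and let $m_k,c_k$ be positive integers with $m_kc_k=N_k$, $m_k\to\infty$ and $c_k\to\infty$. Define $$a_k=\lambda\Delta+\frac{\lambda}{m_k\mu},\qquad P_{b,k}=\frac{a_k^{c_k}/c_k!}{\sum_{j=0}^{c_k}a_k^{j}/j!},\qquad \mathbb{E}[T_{\text{sys},k}]=\Big(\Delta+\frac{1}{m_k\mu}\Big)(1-P_{b,k})+T_{cl}\,P_{b,k}.$$ Then $\lim_{k\to\infty}\mathbb{E}[T_{\text{sys},k}]=\Delta$.
   Context: Model: an edge system with $N$ workers is split into $c$ groups of $m$ workers ($N=mc$); jobs arrive as a Poisson process of rate $\lambda$, each job is replicated on the $m$ workers of a free group, and jobs finding all groups busy are blocked and sent to the cloud, where they take expected time $T_{cl}$. Worker service times are shifted exponential $\mathrm{SExp}(\Delta,\mu)$ ($\Delta$ plus an exponential of rate $\mu$), so the job-computing time has mean $\Delta+\frac{1}{m\mu}$. The blocking probability is the Erlang B formula with $c$ servers and offered load $\lambda(\Delta+\frac{1}{m\mu})$, and the average system time is $(1-P_b)\mathbb{E}[T_{\text{job}}]+P_b T_{cl}$. *)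

theory Defs
  imports "HOL-Analysis.Analysis"
begin

definition erlang_B :: "nat \<Rightarrow> real \<Rightarrow> real" where
  "erlang_B c a = (a ^ c / fact c) / (\<Sum>j=0..c. a ^ j / fact j)"

definition offered_load :: "real \<Rightarrow> real \<Rightarrow> real \<Rightarrow> nat \<Rightarrow> real" where
  "offered_load lam mu Delta m = lam * Delta + lam / (real m * mu)"

definition avg_sys_time :: "real \<Rightarrow> real \<Rightarrow> real \<Rightarrow> real \<Rightarrow> nat \<Rightarrow> nat \<Rightarrow> real" where
  "avg_sys_time lam mu Delta Tcl m c =
     (let Pb = erlang_B c (offered_load lam mu Delta m)
      in (Delta + 1 / (real m * mu)) * (1 - Pb) + Tcl * Pb)"

end

theory Submission
  imports Defs
begin

text \<open>The Erlang B denominator is at least its first term 1, so the blocking probability is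
  bounded by the last term \<open>a^c / c!\<close> of the exponential series. Since the offered load stays
  bounded while the number of groups \<open>c\<close> grows, this term vanishes, so jobs are almost never
  sent to the cloud; meanwhile the job-computing time \<open>\<Delta> + 1/(m\<mu>)\<close> tends to \<open>\<Delta>\<close>.\<close>

lemma power_div_fact_LIMSEQ_zero: "(\<lambda>n. x ^ n / fact n :: real) \<longlonglongrightarrow> 0"
proof -
  have "(\<lambda>n. inverse (fact n) * x ^ n :: real) \<longlonglongrightarrow> 0"
    by (rule summable_LIMSEQ_zero[OF summable_exp])
  then show ?thesis
    by (simp add: divide_inverse mult.commute)
qed

lemma erlang_B_denominator_ge_1:
  fixes a :: real
  assumes "0 \<le> a"
  shows "1 \<le> (\<Sum>j=0..c. a ^ j / fact j)"
proof -
  have "(\<Sum>j\<in>{0}. a ^ j / fact j) \<le> (\<Sum>j=0..c. a ^ j / fact j)"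
    by (rule sum_mono2) (use assms in auto)
  then show ?thesis
    by simp
qed

lemma erlang_B_nonneg:
  assumes "0 \<le> a"
  shows "0 \<le> erlang_B c a"
  unfolding erlang_B_def using assms erlang_B_denominator_ge_1[OF assms, of c] by simp

lemma erlang_B_le_last_term:
  assumes "0 \<le> a"
  shows "erlang_B c a \<le> a ^ c / fact c"
proof -
  have "a ^ c / fact c / (\<Sum>j=0..c. a ^ j / fact j) \<le> a ^ c / fact c / 1"
    using assms erlang_B_denominator_ge_1[OF assms, of c] by (intro divide_left_mono) auto
  then show ?thesis
    unfolding erlang_B_def by simp
qed

lemma erlang_B_LIMSEQ_zero:
  fixes a :: "nat \<Rightarrow> real" and c :: "nat \<Rightarrow> nat"
  assumes "\<And>k. 0 \<le> a k" and "\<And>k. a k \<le> B"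
    and "filterlim c at_top sequentially"
  shows "(\<lambda>k. erlang_B (c k) (a k)) \<longlonglongrightarrow> 0"
proof (rule tendsto_sandwich[OF _ _ tendsto_const])
  show "(\<lambda>k. B ^ c k / fact (c k)) \<longlonglongrightarrow> 0"
    using filterlim_compose[OF power_div_fact_LIMSEQ_zero assms(3)] .
  have "erlang_B (c k) (a k) \<le> B ^ c k / fact (c k)" for k
  proof -
    have "erlang_B (c k) (a k) \<le> a k ^ c k / fact (c k)"
      using assms(1) by (rule erlang_B_le_last_term)
    also have "\<dots> \<le> B ^ c k / fact (c k)"
      using assms by (intro divide_right_mono power_mono) auto
    finally show ?thesis .
  qed
  then show "\<forall>\<^sub>F k in sequentially. erlang_B (c k) (a k) \<le> B ^ c k / fact (c k)"
    by simp
  show "\<forall>\<^sub>F k in sequentially. 0 \<le> erlang_B (c k) (a k)"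
    using assms(1) erlang_B_nonneg by simp
qed

lemma offered_load_nonneg:
  "0 \<le> lam \<Longrightarrow> 0 \<le> mu \<Longrightarrow> 0 \<le> Delta \<Longrightarrow> 0 \<le> offered_load lam mu Delta m"
  unfolding offered_load_def by simp

lemma offered_load_le:
  assumes "0 \<le> lam" and "0 < mu" and "0 < m"
  shows "offered_load lam mu Delta m \<le> lam * Delta + lam / mu"
proof -
  have "lam / (real m * mu) \<le> lam / mu"
    using assms by (simp add: frac_le)
  then show ?thesis
    unfolding offered_load_def by simp
qed

lemma inverse_scaled_LIMSEQ_zero:
  fixes m :: "nat \<Rightarrow> nat"
  assumes "0 < mu" and "filterlim m at_top sequentially"
  shows "(\<lambda>k. 1 / (real (m k) * mu)) \<longlonglongrightarrow> 0"
proof (rule tendsto_divide_0[OF tendsto_const])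
  have "filterlim (\<lambda>k. real (m k)) at_top sequentially"
    using filterlim_compose[OF filterlim_real_sequentially assms(2)] .
  then have "filterlim (\<lambda>k. real (m k) * mu) at_top sequentially"
    by (rule filterlim_at_top_mult_tendsto_pos[OF tendsto_const assms(1)])
  then show "filterlim (\<lambda>k. real (m k) * mu) at_infinity sequentially"
    by (rule filterlim_at_top_imp_at_infinity)
qed

theorem theorem3:
  fixes lam mu Delta Tcl :: real and N m c :: "nat \<Rightarrow> nat"
  assumes "lam > 0" and "mu > 0" and "Delta \<ge> 0" and "Tcl > 0"
    and "\<And>k. N k > 0" and "\<And>k. m k > 0" and "\<And>k. c k > 0"
    and "\<And>k. m k * c k = N k"
    and "filterlim N at_top sequentially"
    and "filterlim m at_top sequentially"
    and "filterlim c at_top sequentially"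
  shows "(\<lambda>k. avg_sys_time lam mu Delta Tcl (m k) (c k)) \<longlonglongrightarrow> Delta"
proof -
  define P where "P k = erlang_B (c k) (offered_load lam mu Delta (m k))" for k
  have "P \<longlonglongrightarrow> 0"
    unfolding P_def
    using assms(1-3,6,11) offered_load_nonneg offered_load_le
    by (intro erlang_B_LIMSEQ_zero[where B = "lam * Delta + lam / mu"]) auto
  moreover have "(\<lambda>k. 1 / (real (m k) * mu)) \<longlonglongrightarrow> 0"
    using assms(2,10) by (rule inverse_scaled_LIMSEQ_zero)
  ultimately have "(\<lambda>k. (Delta + 1 / (real (m k) * mu)) * (1 - P k) + Tcl * P k)
      \<longlonglongrightarrow> (Delta + 0) * (1 - 0) + Tcl * 0"
    by (intro tendsto_intros)
  then show ?thesis
    unfolding avg_sys_time_def P_def Let_def by simp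
qed

end
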